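(* Let $m\ge 2$, let $C=uRM(m)$ (defined in the context), and fix any choice of base qubits $b_0,\dots,b_m$ for $C$. Then the parity labels $L(q)$ of the $2^m$ qubits $q$ are exactly all the odd-cardinality subsets of $\{0,1,\dots,m\}$, each such subset being the label of exactly one qubit.
   Context: Let $a=\lceil m/2\rceil$, $b=\lfloor m/2\rfloor$. Place $2^m$ bits (qubits) on a grid with $2^b$ rows and $2^a$ columns, positions $(i,j)$, row $1$ on top, column $1$ leftmost. Bulk checks: for $1\le i<2^b$, $1\le j<2^a$, the set $\{(i,j),(i+1,j),(i,j+1),(i+1,j+1)\}$. Boundary checks: for a line of $L=2^n$ positions $1,\dots,L$, each $s\in\{1,\dots,n-1\}$, $w=2^s$, and integer $t$ with $-L/(2w)+1\le t\le L/(2w)-1$, $S(w,t)=\{L/2-w/2+wt,\ L/2-w/2+wt+1,\ L/2+w/2+wt,\ L/2+w/2+wt+1\}$; these with $n=a$ on the top row ($j\mapsto(1,j)$) and with $n=b$ on the leftmost column ($i\mapsto(i,1)$). $C=uRM(m)$ is the set of $x\in\mathbb{F}_2^{2^m}$ with even sum over every check; it has dimension $m+1$. Base qubits and parity labels: base qubits are $m+1$ positions $b_0,\dots,b_m$ such that the map $C\to\mathbb{F}_2^{m+1}$, $x\mapsto(x_{b_0},\dots,x_{b_m})$ is a bijection. For each qubit $q$, its parity label is the unique subset $L(q)\subseteq\{0,\dots,m\}$ such that $x_q=\sum_{i\in L(q)}x_{b_i}$ for all $x\in C$. *)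

theory Defs
  imports Main
begin

definition col_exp :: "nat \<Rightarrow> nat" where "col_exp m = (m + 1) div 2"
definition row_exp :: "nat \<Rightarrow> nat" where "row_exp m = m div 2"

definition grid :: "nat \<Rightarrow> (nat \<times> nat) set" where
  "grid m = {1..2 ^ row_exp m} \<times> {1..2 ^ col_exp m}"

definition bulk_checks :: "nat \<Rightarrow> (nat \<times> nat) set set" where
  "bulk_checks m = {{(i,j), (i+1,j), (i,j+1), (i+1,j+1)} | i j.
      1 \<le> i \<and> i < 2 ^ row_exp m \<and> 1 \<le> j \<and> j < 2 ^ col_exp m}"

text \<open>Boundary checks on a line of L = 2^n positions 1..L (as integers).\<close>
definition line_checks :: "nat \<Rightarrow> int set set" where
  "line_checks n = {(let L = (2::int) ^ n; w = (2::int) ^ s in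
        {L div 2 - w div 2 + w * t, L div 2 - w div 2 + w * t + 1,
         L div 2 + w div 2 + w * t, L div 2 + w div 2 + w * t + 1}) | s t.
      1 \<le> s \<and> s \<le> n - 1 \<and>
      - ((2::int) ^ n div (2 * 2 ^ s)) + 1 \<le> t \<and> t \<le> (2::int) ^ n div (2 * 2 ^ s) - 1}"

definition boundary_checks :: "nat \<Rightarrow> (nat \<times> nat) set set" where
  "boundary_checks m =
     {(\<lambda>j. (1::nat, nat j)) ` S | S. S \<in> line_checks (col_exp m)} \<union>
     {(\<lambda>i. (nat i, 1::nat)) ` S | S. S \<in> line_checks (row_exp m)}"

definition checks :: "nat \<Rightarrow> (nat \<times> nat) set set" where
  "checks m = bulk_checks m \<union> boundary_checks m"

definition uRM :: "nat \<Rightarrow> (nat \<times> nat \<Rightarrow> bool) set" where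
  "uRM m = {x. (\<forall>p. p \<notin> grid m \<longrightarrow> \<not> x p) \<and>
               (\<forall>S \<in> checks m. even (card {p \<in> S. x p}))}"

text \<open>Base qubits b_0..b_m: positions such that x \<mapsto> (x(b_0),...,x(b_m)) is a bijection
from the code onto F_2^{m+1} (functions on {0..m}, extended by False).\<close>
definition base_qubits :: "nat \<Rightarrow> (nat \<Rightarrow> nat \<times> nat) \<Rightarrow> bool" where
  "base_qubits m b \<longleftrightarrow> (\<forall>i \<le> m. b i \<in> grid m) \<and>
     bij_betw (\<lambda>x i. if i \<le> m then x (b i) else False) (uRM m)
              {f :: nat \<Rightarrow> bool. \<forall>i > m. \<not> f i}"

text \<open>Parity label of q: the unique S \<subseteq> {0..m} with x_q = sum_{i in S} x_{b_i} over F_2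
for all codewords x.\<close>
definition is_parity_label :: "nat \<Rightarrow> (nat \<Rightarrow> nat \<times> nat) \<Rightarrow> nat \<times> nat \<Rightarrow> nat set \<Rightarrow> bool" where
  "is_parity_label m b q S \<longleftrightarrow> S \<subseteq> {0..m} \<and>
     (\<forall>x \<in> uRM m. x q = odd (card {i \<in> S. x (b i)}))"

definition parity_label :: "nat \<Rightarrow> (nat \<Rightarrow> nat \<times> nat) \<Rightarrow> nat \<times> nat \<Rightarrow> nat set" where
  "parity_label m b q = (THE S. is_parity_label m b q S)"

end

theory Submission
  imports Defs
begin

(* uRM(m) is closed under XOR, so when the base qubits form an information set every codeword
   is the XOR of the unit codewords e_k (those with x(b_i) = [i = k]) selected by its values on
   the base qubits; the parity label of q is therefore unique and equals {k. e_k(q)}. It has odd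
   size because the all-ones word on the grid is a codeword. Labels of distinct qubits differ
   because codewords separate qubits: for every bit v, the word (i,j) |-> bit v of the Gray code
   of j - 1 (or of i - 1) is a codeword, since the Gray code changes from n - 1 to n exactly in
   the bit given by the 2-adic valuation of n, and both pairs of a boundary check of width w
   start at positions congruent to w/2 modulo w. Counting (2^m qubits, 2^m odd subsets of
   {0..m}) finishes the proof. *)

section \<open>Parity of cardinalities\<close>

lemma odd_card_filter_insert:
  assumes "finite A" "a \<notin> A"
  shows "odd (card {i \<in> insert a A. P i}) \<longleftrightarrow> P a \<noteq> odd (card {i \<in> A. P i})"
proof -
  have "{i \<in> insert a A. P i} = (if P a then insert a {i \<in> A. P i} else {i \<in> A. P i})"
    by auto
  then show ?thesis using assms by simp
qed

lemma odd_card_filter_xor: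
  assumes "finite S"
  shows "odd (card {p \<in> S. x p \<noteq> y p}) \<longleftrightarrow> odd (card {p \<in> S. x p}) \<noteq> odd (card {p \<in> S. y p})"
  using assms
proof (induction S rule: finite_induct)
  case (insert a S)
  then show ?case by (simp only: odd_card_filter_insert[OF insert.hyps(1,2)]) auto
qed simp

lemma even_card_filter_four:
  assumes "distinct [a, b, c, d]"
  shows "even (card {q \<in> {a, b, c, d}. x q}) \<longleftrightarrow> ((x a \<noteq> x b) \<longleftrightarrow> (x c \<noteq> x d))"
  using assms odd_card_filter_insert[of "{}" d x] odd_card_filter_insert[of "{d}" c x]
    odd_card_filter_insert[of "{c, d}" b x] odd_card_filter_insert[of "{b, c, d}" a x]
  by auto

lemma card_odd_subsets:
  assumes "finite A" "a \<in> A"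
  shows "card {S. S \<subseteq> A \<and> odd (card S)} = 2 ^ (card A - 1)"
proof -
  let ?f = "\<lambda>T. if odd (card T) then T else insert a T"
  have "bij_betw ?f (Pow (A - {a})) {S. S \<subseteq> A \<and> odd (card S)}"
  proof (rule bij_betw_byWitness[where f' = "\<lambda>S. S - {a}"])
    show "\<forall>T \<in> Pow (A - {a}). ?f T - {a} = T" by auto
    show "\<forall>S \<in> {S. S \<subseteq> A \<and> odd (card S)}. ?f (S - {a}) = S"
    proof
      fix S assume S: "S \<in> {S. S \<subseteq> A \<and> odd (card S)}"
      then have "finite S" using assms(1) finite_subset by blast
      with S show "?f (S - {a}) = S"
        by (cases "a \<in> S") (auto simp: card_Diff_singleton insert_absorb)
    qed
    show "?f ` Pow (A - {a}) \<subseteq> {S. S \<subseteq> A \<and> odd (card S)}"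
    proof
      fix S assume "S \<in> ?f ` Pow (A - {a})"
      then obtain T where T: "T \<subseteq> A - {a}" "S = ?f T" by blast
      then have "finite T" "a \<notin> T" using assms(1) finite_subset by blast+
      with T assms(2) show "S \<in> {S. S \<subseteq> A \<and> odd (card S)}" by auto
    qed
    show "(\<lambda>S. S - {a}) ` {S. S \<subseteq> A \<and> odd (card S)} \<subseteq> Pow (A - {a})" by auto
  qed
  then show ?thesis
    using assms by (simp add: bij_betw_same_card[symmetric] card_Pow)
qed

section \<open>The Gray code\<close>

definition gray_code :: "nat \<Rightarrow> nat" where
  "gray_code n = xor n (n div 2)"

lemma bit_gray_code: "bit (gray_code n) v \<longleftrightarrow> bit n v \<noteq> bit n (Suc v)"
  by (simp add: gray_code_def bit_xor_iff bit_Suc)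

lemma bit_imp_less_nat: "bit (n::nat) v \<Longrightarrow> v < n"
proof -
  assume "bit n v"
  then have "0 < n div 2 ^ v" by (simp add: bit_iff_odd) (rule ccontr, simp)
  then have "2 ^ v \<le> n" by (simp add: div_greater_zero_iff)
  then show "v < n" using less_exp[of v] by linarith
qed

lemma inj_gray_code: "inj gray_code"
proof (rule injI)
  fix n n' assume eq: "gray_code n = gray_code n'"
  show "n = n'"
  proof (rule ccontr)
    assume "n \<noteq> n'"
    define D where "D = {v. bit n v \<noteq> bit n' v}"
    have "D \<subseteq> {..<n + n'}"
    proof
      fix v assume "v \<in> D"
      then have "bit n v \<or> bit n' v" unfolding D_def by blast
      then show "v \<in> {..<n + n'}" using bit_imp_less_nat[of n v] bit_imp_less_nat[of n' v] by auto
    qed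
    then have "finite D" by (rule finite_subset) simp
    moreover have "D \<noteq> {}" using \<open>n \<noteq> n'\<close> bit_eq_iff unfolding D_def by blast
    ultimately have "Max D \<in> D" by (rule Max_in)
    moreover have "Suc (Max D) \<notin> D"
      using Max_ge[OF \<open>finite D\<close>, of "Suc (Max D)"] by (meson Suc_n_not_le_n)
    ultimately have "bit (gray_code n) (Max D) \<noteq> bit (gray_code n') (Max D)"
      by (simp add: bit_gray_code D_def)
    with eq show False by simp
  qed
qed

lemma gray_code_bit_separates:
  assumes "n \<noteq> n'"
  obtains v where "bit (gray_code n) v \<noteq> bit (gray_code n') v"
proof -
  have "gray_code n \<noteq> gray_code n'"
    using assms by (simp add: inj_eq[OF inj_gray_code])
  then show thesis using that bit_eq_iff by blast
qed

lemma bit_gray_code_Suc_flip: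
  "bit (gray_code n) v \<noteq> bit (gray_code (Suc n)) v \<longleftrightarrow> (2 ^ v dvd Suc n) \<noteq> (2 ^ Suc v dvd Suc n)"
proof -
  have Suc_div: "Suc n div d = n div d + of_bool (d dvd Suc n)" for d :: nat
    by (simp add: div_Suc dvd_eq_mod_eq_0)
  show ?thesis
    unfolding bit_gray_code unfolding bit_iff_odd Suc_div[of "2 ^ v"] Suc_div[of "2 ^ Suc v"] by auto
qed

lemma dvd_add_power_iff:
  fixes d P :: nat
  assumes "\<not> d ^ s dvd P"
  shows "d ^ v dvd P + d ^ s \<longleftrightarrow> d ^ v dvd P"
proof (cases "v \<le> s")
  case True
  then show ?thesis by (simp add: le_imp_power_dvd dvd_add_left_iff)
next
  case False
  then have "d ^ s dvd d ^ v" by (simp add: le_imp_power_dvd)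
  moreover have "\<not> d ^ s dvd P + d ^ s" using assms by (simp add: dvd_add_left_iff)
  ultimately show ?thesis using assms dvd_trans by metis
qed

lemma bit_gray_code_flip_shift:
  assumes "P mod 2 ^ s = 2 ^ (s - 1)"
  shows "(bit (gray_code (P - 1)) v \<noteq> bit (gray_code P) v) \<longleftrightarrow>
         (bit (gray_code (P + 2 ^ s - 1)) v \<noteq> bit (gray_code (P + 2 ^ s)) v)"
proof -
  have "\<not> 2 ^ s dvd P" using assms by (simp add: dvd_eq_mod_eq_0)
  then have "P = Suc (P - 1)" "P + 2 ^ s = Suc (P + 2 ^ s - 1)" by (cases P; simp)+
  then show ?thesis using dvd_add_power_iff[OF \<open>\<not> 2 ^ s dvd P\<close>]
    by (metis bit_gray_code_Suc_flip)
qed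

section \<open>Information sets of binary linear codes\<close>

definition linear_code :: "('a \<Rightarrow> bool) set \<Rightarrow> bool" where
  "linear_code C \<longleftrightarrow> (\<lambda>_. False) \<in> C \<and> (\<forall>x \<in> C. \<forall>y \<in> C. (\<lambda>p. x p \<noteq> y p) \<in> C)"

definition base_values :: "nat \<Rightarrow> (nat \<Rightarrow> 'a) \<Rightarrow> ('a \<Rightarrow> bool) \<Rightarrow> nat \<Rightarrow> bool" where
  "base_values m b x = (\<lambda>i. if i \<le> m then x (b i) else False)"

lemma linear_codeD:
  assumes "linear_code C"
  shows linear_code_zero: "(\<lambda>_. False) \<in> C"
    and linear_code_xor: "x \<in> C \<Longrightarrow> y \<in> C \<Longrightarrow> (\<lambda>p. x p \<noteq> y p) \<in> C"
  using assms unfolding linear_code_def by blast+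

lemma linear_code_xor_sum:
  assumes "linear_code C" "finite A" "\<And>i. i \<in> A \<Longrightarrow> e i \<in> C"
  shows "(\<lambda>p. odd (card {i \<in> A. e i p})) \<in> C"
  using assms(2,3)
proof (induction A rule: finite_induct)
  case empty
  then show ?case using linear_code_zero[OF assms(1)] by simp
next
  case (insert a A)
  then have "(\<lambda>p. e a p \<noteq> odd (card {i \<in> A. e i p})) \<in> C"
    by (intro linear_code_xor[OF assms(1)]) simp_all
  then show ?case by (simp only: odd_card_filter_insert[OF insert.hyps(1,2)])
qed

lemma information_set_unit_codewords:
  assumes "bij_betw (base_values m b) C {f. \<forall>i > m. \<not> f i}"
  obtains e where "\<And>k. k \<le> m \<Longrightarrow> e k \<in> C" "\<And>k i. k \<le> m \<Longrightarrow> i \<le> m \<Longrightarrow> e k (b i) = (i = k)"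
proof -
  have "\<exists>e. k \<le> m \<longrightarrow> e \<in> C \<and> base_values m b e = (\<lambda>i. i = k)" for k
  proof (cases "k \<le> m")
    case True
    then have "(\<lambda>i. i = k) \<in> base_values m b ` C"
      using bij_betw_imp_surj_on[OF assms] by simp
    then obtain e where "(\<lambda>i. i = k) = base_values m b e" "e \<in> C" by (rule imageE)
    then show ?thesis by (intro exI[of _ e]) simp
  qed simp
  then obtain e where e: "\<And>k. k \<le> m \<Longrightarrow> e k \<in> C \<and> base_values m b (e k) = (\<lambda>i. i = k)"
    by metis
  show thesis
  proof (rule that)
    show "e k \<in> C" if "k \<le> m" for k using e[OF that] ..
    show "e k (b i) = (i = k)" if "k \<le> m" "i \<le> m" for k i
      using fun_cong[OF conjunct2[OF e[OF that(1)]], of i] that(2) by (simp add: base_values_def)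
  qed
qed

lemma linear_code_decompose:
  assumes "linear_code C" "inj_on (base_values m b) C" "x \<in> C"
    and e_in: "\<And>k. k \<le> m \<Longrightarrow> e k \<in> C"
    and e_base: "\<And>k i. k \<le> m \<Longrightarrow> i \<le> m \<Longrightarrow> e k (b i) = (i = k)"
  shows "x p = odd (card {k. k \<le> m \<and> x (b k) \<and> e k p})"
proof -
  let ?y = "\<lambda>p. odd (card {k. k \<le> m \<and> x (b k) \<and> e k p})"
  have "?y \<in> C"
    using linear_code_xor_sum[of C "{k. k \<le> m \<and> x (b k)}" e] assms(1) e_in by simp
  moreover have "base_values m b x = base_values m b ?y"
  proof
    fix i
    have "{k. k \<le> m \<and> x (b k) \<and> e k (b i)} = (if i \<le> m \<and> x (b i) then {i} else {})"
      if "i \<le> m" using that e_base by auto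
    then show "base_values m b x i = base_values m b ?y i" by (simp add: base_values_def)
  qed
  ultimately have "x = ?y" using inj_onD[OF assms(2) _ assms(3)] by blast
  then show ?thesis by (rule fun_cong)
qed

lemma linear_code_unique_parity_label:
  assumes code: "linear_code C" and bij: "bij_betw (base_values m b) C {f. \<forall>i > m. \<not> f i}"
  shows "\<exists>!S. S \<subseteq> {0..m} \<and> (\<forall>x \<in> C. x q = odd (card {i \<in> S. x (b i)}))"
proof -
  obtain e where e_in: "\<And>k. k \<le> m \<Longrightarrow> e k \<in> C"
    and e_base: "\<And>k i. k \<le> m \<Longrightarrow> i \<le> m \<Longrightarrow> e k (b i) = (i = k)"
    using information_set_unit_codewords[OF bij] by blast
  note decompose = linear_code_decompose[OF code bij_betw_imp_inj_on[OF bij] _ e_in e_base]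
  define L where "L = {k. k \<le> m \<and> e k q}"
  show ?thesis
  proof (rule ex1I[of _ L])
    show "L \<subseteq> {0..m} \<and> (\<forall>x \<in> C. x q = odd (card {i \<in> L. x (b i)}))"
    proof (intro conjI ballI)
      fix x assume "x \<in> C"
      then have "x q = odd (card {k. k \<le> m \<and> x (b k) \<and> e k q})" by (rule decompose)
      also have "{k. k \<le> m \<and> x (b k) \<and> e k q} = {i \<in> L. x (b i)}" by (auto simp: L_def)
      finally show "x q = odd (card {i \<in> L. x (b i)})" .
    qed (auto simp: L_def)
  next
    fix S assume "S \<subseteq> {0..m} \<and> (\<forall>x \<in> C. x q = odd (card {i \<in> S. x (b i)}))"
    then have S: "S \<subseteq> {0..m}" and S_label: "\<And>x. x \<in> C \<Longrightarrow> x q = odd (card {i \<in> S. x (b i)})"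
      by simp_all
    have "k \<in> S \<longleftrightarrow> e k q" if "k \<le> m" for k
    proof -
      have "{i \<in> S. e k (b i)} = (if k \<in> S then {k} else {})" using S that e_base by auto
      then show ?thesis using S_label[OF e_in[OF that]] by simp
    qed
    with S show "S = L" by (auto simp: L_def)
  qed
qed

section \<open>The code uRM(m)\<close>

lemma line_checks_shape:
  assumes "T \<in> line_checks n"
  obtains P s where "1 \<le> s" "P mod 2 ^ s = 2 ^ (s - 1)" "P + 2 ^ s < 2 ^ n"
    "T = int ` {P, P + 1, P + 2 ^ s, P + 2 ^ s + 1}"
proof -
  obtain s t where s: "1 \<le> s" "s \<le> n - 1"
    and t: "- ((2::int) ^ n div (2 * 2 ^ s)) + 1 \<le> t" "t \<le> (2::int) ^ n div (2 * 2 ^ s) - 1"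
    and T: "T = (let L = (2::int) ^ n; w = (2::int) ^ s in
        {L div 2 - w div 2 + w * t, L div 2 - w div 2 + w * t + 1,
         L div 2 + w div 2 + w * t, L div 2 + w div 2 + w * t + 1})"
    using assms unfolding line_checks_def by blast
  define h :: nat where "h = 2 ^ (s - 1)"
  define K :: nat where "K = 2 ^ (n - 1 - s)"
  have "h \<ge> 1" "K \<ge> 1" by (simp_all add: h_def K_def)
  have w: "(2::nat) ^ s = 2 * h"
    using s(1) by (simp add: h_def power_Suc[symmetric])
  have "(2::nat) ^ n = 2 ^ Suc (s + (n - 1 - s))"
    using s by (intro arg_cong[where f = "(^) 2"]) simp
  then have L: "(2::nat) ^ n = 4 * h * K"
    by (simp add: power_add w K_def)
  have wi: "(2::int) ^ s = 2 * int h" and Li: "(2::int) ^ n = 4 * int h * int K"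
    using arg_cong[OF w, of int] arg_cong[OF L, of int] by simp_all
  \<comment> \<open>The check starts at L/2 - w/2 + wt = h + 2hu with u = t + K - 1 ranging over 0..2K-2.\<close>
  define u where "u = t + int K - 1"
  have u: "0 \<le> u" "u \<le> 2 * int K - 2"
    using t \<open>h \<ge> 1\<close> unfolding u_def Li wi by simp_all
  define P where "P = h + 2 * h * nat u"
  have Pi: "int P = int h + 2 * int h * u"
    using u(1) by (simp add: P_def)
  show ?thesis
  proof
    show "1 \<le> s" by (fact s(1))
    show "P mod 2 ^ s = 2 ^ (s - 1)"
      unfolding w h_def[symmetric] using \<open>h \<ge> 1\<close> by (simp add: P_def)
    have "2 * int h * u \<le> 2 * int h * (2 * int K - 2)"
      using u(2) by (intro mult_left_mono) simp_all
    then have "int P + 2 * int h < 4 * int h * int K"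
      using \<open>h \<ge> 1\<close> unfolding Pi by (simp add: algebra_simps)
    then show "P + 2 ^ s < 2 ^ n"
      unfolding w L by (metis of_nat_add of_nat_less_iff of_nat_mult of_nat_numeral)
    show "T = int ` {P, P + 1, P + 2 ^ s, P + 2 ^ s + 1}"
      unfolding T Let_def Li wi by (simp add: Pi u_def wi algebra_simps)
  qed
qed

lemma checks_cases:
  assumes "S \<in> checks m"
  obtains (bulk) i j where "1 \<le> i" "i < 2 ^ row_exp m" "1 \<le> j" "j < 2 ^ col_exp m"
      "S = {(i, j), (i + 1, j), (i, j + 1), (i + 1, j + 1)}"
  | (top) P s where "1 \<le> s" "P mod 2 ^ s = 2 ^ (s - 1)" "P + 2 ^ s < 2 ^ col_exp m"
      "S = {(1, P), (1, P + 1), (1, P + 2 ^ s), (1, P + 2 ^ s + 1)}"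
  | (left) P s where "1 \<le> s" "P mod 2 ^ s = 2 ^ (s - 1)" "P + 2 ^ s < 2 ^ row_exp m"
      "S = {(P, 1), (P + 1, 1), (P + 2 ^ s, 1), (P + 2 ^ s + 1, 1)}"
proof -
  consider "S \<in> bulk_checks m"
    | T where "T \<in> line_checks (col_exp m)" "S = (\<lambda>j. (1, nat j)) ` T"
    | T where "T \<in> line_checks (row_exp m)" "S = (\<lambda>i. (nat i, 1)) ` T"
    using assms unfolding checks_def boundary_checks_def by blast
  then show thesis
  proof cases
    case 1
    then show thesis using bulk unfolding bulk_checks_def by blast
  next
    case (2 T)
    from 2(1) obtain P s where Ps: "1 \<le> s" "P mod 2 ^ s = 2 ^ (s - 1)" "P + 2 ^ s < 2 ^ col_exp m"
      and "T = int ` {P, P + 1, P + 2 ^ s, P + 2 ^ s + 1}" by (rule line_checks_shape)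
    with 2(2) have "S = (\<lambda>j. (1, j)) ` {P, P + 1, P + 2 ^ s, P + 2 ^ s + 1}"
      by (simp only: image_image nat_int)
    with Ps show thesis by (intro top) simp_all
  next
    case (3 T)
    from 3(1) obtain P s where Ps: "1 \<le> s" "P mod 2 ^ s = 2 ^ (s - 1)" "P + 2 ^ s < 2 ^ row_exp m"
      and "T = int ` {P, P + 1, P + 2 ^ s, P + 2 ^ s + 1}" by (rule line_checks_shape)
    with 3(2) have "S = (\<lambda>i. (i, 1)) ` {P, P + 1, P + 2 ^ s, P + 2 ^ s + 1}"
      by (simp only: image_image nat_int)
    with Ps show thesis by (intro left) simp_all
  qed
qed

lemma finite_checks: "S \<in> checks m \<Longrightarrow> finite S"
  by (erule checks_cases) simp_all

lemma mem_grid: "(i, j) \<in> grid m \<longleftrightarrow> 1 \<le> i \<and> i \<le> 2 ^ row_exp m \<and> 1 \<le> j \<and> j \<le> 2 ^ col_exp m"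
  by (auto simp: grid_def)

lemma card_grid: "card (grid m) = 2 ^ m"
proof -
  have "row_exp m + col_exp m = m" unfolding row_exp_def col_exp_def by simp
  then show ?thesis unfolding grid_def by (simp add: card_cartesian_product power_add[symmetric])
qed

lemma linear_code_uRM: "linear_code (uRM m)"
  unfolding linear_code_def
proof (intro conjI ballI)
  show "(\<lambda>_. False) \<in> uRM m" by (simp add: uRM_def)
  fix x y assume x: "x \<in> uRM m" and y: "y \<in> uRM m"
  show "(\<lambda>p. x p \<noteq> y p) \<in> uRM m"
    unfolding uRM_def
  proof (intro CollectI conjI allI impI ballI)
    fix p assume "p \<notin> grid m"
    then show "\<not> (x p \<noteq> y p)" using x y unfolding uRM_def by blast
  next
    fix S assume S: "S \<in> checks m"
    then have "even (card {p \<in> S. x p})" "even (card {p \<in> S. y p})"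
      using x y by (simp_all add: uRM_def)
    then show "even (card {p \<in> S. x p \<noteq> y p})"
      using odd_card_filter_xor[OF finite_checks[OF S], of x y] by blast
  qed
qed

lemma grid_pattern_in_uRM:
  fixes f g :: "nat \<Rightarrow> bool"
  assumes f: "\<And>P s. P mod 2 ^ s = 2 ^ (s - 1) \<Longrightarrow>
      (f (P - 1) \<noteq> f P) \<longleftrightarrow> (f (P + 2 ^ s - 1) \<noteq> f (P + 2 ^ s))"
    and g: "\<And>P s. P mod 2 ^ s = 2 ^ (s - 1) \<Longrightarrow>
      (g (P - 1) \<noteq> g P) \<longleftrightarrow> (g (P + 2 ^ s - 1) \<noteq> g (P + 2 ^ s))"
  shows "(\<lambda>p. p \<in> grid m \<and> (g (fst p - 1) \<noteq> f (snd p - 1))) \<in> uRM m"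
  unfolding uRM_def
proof (intro CollectI conjI allI impI ballI)
  let ?x = "\<lambda>p. p \<in> grid m \<and> (g (fst p - 1) \<noteq> f (snd p - 1))"
  fix S assume "S \<in> checks m"
  then show "even (card {p \<in> S. ?x p})"
  proof (cases rule: checks_cases)
    case (bulk i j)
    then have "(i, j) \<in> grid m" "(i + 1, j) \<in> grid m" "(i, j + 1) \<in> grid m" "(i + 1, j + 1) \<in> grid m"
      by (simp_all add: mem_grid)
    then show ?thesis
      unfolding bulk(5) by (subst even_card_filter_four) auto
  next
    case (top P s)
    have "2 \<le> (2::nat) ^ s" using top(1) power_increasing[of 1 s "2::nat"] by simp
    moreover have "0 < P" using top(2) by (cases P) simp_all
    ultimately show ?thesis
      using top f[OF top(2)] unfolding top(4) by (subst even_card_filter_four) (auto simp: mem_grid)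
  next
    case (left P s)
    have "2 \<le> (2::nat) ^ s" using left(1) power_increasing[of 1 s "2::nat"] by simp
    moreover have "0 < P" using left(2) by (cases P) simp_all
    ultimately show ?thesis
      using left g[OF left(2)] unfolding left(4) by (subst even_card_filter_four) (auto simp: mem_grid)
  qed
qed simp

lemma grid_indicator_in_uRM: "(\<lambda>p. p \<in> grid m) \<in> uRM m"
  using grid_pattern_in_uRM[of "\<lambda>_. False" "\<lambda>_. True" m] by simp

lemma gray_row_word_in_uRM: "(\<lambda>p. p \<in> grid m \<and> bit (gray_code (fst p - 1)) v) \<in> uRM m"
  using grid_pattern_in_uRM[where f = "\<lambda>_. False" and g = "\<lambda>n. bit (gray_code n) v",
      OF _ bit_gray_code_flip_shift]
  by simp

lemma gray_column_word_in_uRM: "(\<lambda>p. p \<in> grid m \<and> bit (gray_code (snd p - 1)) v) \<in> uRM m"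
  using grid_pattern_in_uRM[where f = "\<lambda>n. bit (gray_code n) v" and g = "\<lambda>_. False",
      OF bit_gray_code_flip_shift]
  by simp

lemma uRM_separates:
  assumes "q \<in> grid m" "q' \<in> grid m" "q \<noteq> q'"
  shows "\<exists>x \<in> uRM m. x q \<noteq> x q'"
proof (cases "fst q = fst q'")
  case True
  with assms have "snd q - 1 \<noteq> snd q' - 1" by (auto simp: grid_def prod_eq_iff)
  then obtain v where v: "bit (gray_code (snd q - 1)) v \<noteq> bit (gray_code (snd q' - 1)) v"
    by (rule gray_code_bit_separates)
  define x where "x = (\<lambda>p. p \<in> grid m \<and> bit (gray_code (snd p - 1)) v)"
  have "x \<in> uRM m" unfolding x_def by (rule gray_column_word_in_uRM)
  moreover have "x q \<noteq> x q'" using assms(1,2) v by (simp add: x_def)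
  ultimately show ?thesis by blast
next
  case False
  with assms have "fst q - 1 \<noteq> fst q' - 1" by (auto simp: grid_def)
  then obtain v where v: "bit (gray_code (fst q - 1)) v \<noteq> bit (gray_code (fst q' - 1)) v"
    by (rule gray_code_bit_separates)
  define x where "x = (\<lambda>p. p \<in> grid m \<and> bit (gray_code (fst p - 1)) v)"
  have "x \<in> uRM m" unfolding x_def by (rule gray_row_word_in_uRM)
  moreover have "x q \<noteq> x q'" using assms(1,2) v by (simp add: x_def)
  ultimately show ?thesis by blast
qed

section \<open>Parity labels\<close>

lemma is_parity_label_odd_card:
  assumes "\<forall>i \<le> m. b i \<in> grid m" "q \<in> grid m" "is_parity_label m b q S"
  shows "odd (card S)"
proof -
  from assms(3) have S: "S \<subseteq> {0..m}" and eq: "\<forall>x \<in> uRM m. x q = odd (card {i \<in> S. x (b i)})"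
    unfolding is_parity_label_def by simp_all
  have "{i \<in> S. b i \<in> grid m} = S" using S assms(1) by auto
  then show ?thesis using bspec[OF eq, of "\<lambda>p. p \<in> grid m"] grid_indicator_in_uRM assms(2) by simp
qed

lemma is_parity_label_inj:
  assumes "q \<in> grid m" "q' \<in> grid m" "is_parity_label m b q S" "is_parity_label m b q' S"
  shows "q = q'"
proof (rule ccontr)
  assume "q \<noteq> q'"
  with assms(1,2) obtain x where "x \<in> uRM m" "x q \<noteq> x q'" by (blast dest: uRM_separates)
  with assms(3,4) show False unfolding is_parity_label_def by metis
qed

theorem lemma2:
  fixes m :: nat and b :: "nat \<Rightarrow> nat \<times> nat"
  assumes "m \<ge> 2" and "base_qubits m b"
  shows "(\<forall>q \<in> grid m. \<exists>!S. is_parity_label m b q S) \<and>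
         bij_betw (parity_label m b) (grid m) {S. S \<subseteq> {0..m} \<and> odd (card S)}"
proof -
  have base: "\<forall>i \<le> m. b i \<in> grid m"
    and bij: "bij_betw (base_values m b) (uRM m) {f. \<forall>i > m. \<not> f i}"
    using assms(2) unfolding base_qubits_def base_values_def by blast+
  have unique: "\<exists>!S. is_parity_label m b q S" for q
    using linear_code_unique_parity_label[OF linear_code_uRM bij] unfolding is_parity_label_def .
  then have label: "is_parity_label m b q (parity_label m b q)" for q
    unfolding parity_label_def by (rule theI')
  let ?Odd = "{S. S \<subseteq> {0..m} \<and> odd (card S)}"
  have inj: "inj_on (parity_label m b) (grid m)"
    using is_parity_label_inj label by (metis inj_onI)
  moreover have "parity_label m b ` grid m \<subseteq> ?Odd"
    using label is_parity_label_odd_card[OF base] unfolding is_parity_label_def by auto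
  moreover have "card (parity_label m b ` grid m) = card ?Odd"
    using card_image[OF inj] card_grid card_odd_subsets[of "{0..m}" 0] by simp
  ultimately have "bij_betw (parity_label m b) (grid m) ?Odd"
    unfolding bij_betw_def by (simp add: card_subset_eq)
  with unique show ?thesis by blast
qed

end
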